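(* Let $a,b,c\ge 0$ and let $I=I_{L(a,b,c)}\subseteq Q$ be the edge ideal of the graph $L(a,b,c)$. For every total order $<$ on $G(I)$ in which $xy$ is the least element, the Lyubeznik resolution $\mathbb{L}_<$ is the minimal $Q$-free resolution of $Q/I$.
   Context: $L(a,b,c)$ is the graph with vertex set $\{x,y\}\cup\{x_i\}_{i=1}^a\cup\{y_j\}_{j=1}^b\cup\{z_k\}_{k=1}^c$ and edges $\{x,y\}$, $\{x,x_i\}$ ($1\le i\le a$), $\{y,y_j\}$ ($1\le j\le b$), $\{x,z_k\},\{y,z_k\}$ ($1\le k\le c$). $Q$ is the polynomial ring over a field $\Bbbk$ in these vertices as variables, and the edge ideal is generated by the products of the endpoints of the edges. For a monomial ideal $I$ with minimal generating set $G(I)$, $m_U=\mathrm{lcm}(U)$ for $U\subseteq G(I)$, the Taylor resolution $\mathbb{T}$ has basis $e_U$ ($U\subseteq G(I)$, $|U|=i$ in degree $i$) and differential $\partial(e_U)=\sum_{u\in U}(-1)^{|\{v\in U:v<u\}|}\frac{m_U}{m_{U\setminus\{u\}}}e_{U\setminus\{u\}}$. For a total order $<$ on $G(I)$, the Lyubeznik resolution $\mathbb{L}_<$ is the subcomplex of $\mathbb{T}$ spanned by those $e_U$, $U=\{u_{i_1}<\cdots<u_{i_s}\}$, such that for every $t<s$ and every generator $u_q<u_{i_t}$, $u_q$ does not divide $\mathrm{lcm}(u_{i_t},u_{i_{t+1}},\ldots,u_{i_s})$; it is a free resolution of $Q/I$. *)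

theory Defs
  imports Main
begin

datatype vtx = VX | VY | XI nat | YJ nat | ZK nat

definition Lverts :: "nat \<Rightarrow> nat \<Rightarrow> nat \<Rightarrow> vtx set" where
  "Lverts a b c = {VX, VY} \<union> XI ` {1..a} \<union> YJ ` {1..b} \<union> ZK ` {1..c}"

definition Ledges :: "nat \<Rightarrow> nat \<Rightarrow> nat \<Rightarrow> vtx set set" where
  "Ledges a b c = {{VX, VY}} \<union> (\<lambda>i. {VX, XI i}) ` {1..a} \<union> (\<lambda>j. {VY, YJ j}) ` {1..b}
     \<union> (\<lambda>k. {VX, ZK k}) ` {1..c} \<union> (\<lambda>k. {VY, ZK k}) ` {1..c}"

text \<open>Monomials of Q = k[vertices] are represented by exponent vectors.\<close>
type_synonym mono = "vtx \<Rightarrow> nat"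

definition mdvd :: "mono \<Rightarrow> mono \<Rightarrow> bool" where
  "mdvd m n \<longleftrightarrow> (\<forall>v. m v \<le> n v)"

text \<open>lcm of a finite set of monomials (lcm of the empty set is 1).\<close>
definition mlcm :: "mono set \<Rightarrow> mono" where
  "mlcm U = (\<lambda>v. Max (insert 0 ((\<lambda>m. m v) ` U)))"

definition edge_mono :: "vtx set \<Rightarrow> mono" where
  "edge_mono e = (\<lambda>v. if v \<in> e then 1 else 0)"

definition min_gens :: "mono set \<Rightarrow> mono set" where
  "min_gens S = {s \<in> S. \<not> (\<exists>t \<in> S. mdvd t s \<and> t \<noteq> s)}"

definition GL :: "nat \<Rightarrow> nat \<Rightarrow> nat \<Rightarrow> mono set" where
  "GL a b c = min_gens (edge_mono ` Ledges a b c)"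

definition lyub_adm :: "mono set \<Rightarrow> (mono \<times> mono) set \<Rightarrow> mono set \<Rightarrow> bool" where
  "lyub_adm G R U \<longleftrightarrow> U \<subseteq> G \<and>
     (\<forall>u \<in> U. (\<exists>w \<in> U. (u, w) \<in> R) \<longrightarrow>
        (\<forall>q \<in> G. (q, u) \<in> R \<longrightarrow> \<not> mdvd q (mlcm {w \<in> U. w = u \<or> (u, w) \<in> R})))"

text \<open>The Lyubeznik complex (a subcomplex of the Taylor complex, a free resolution of Q/I) is
  minimal iff no entry of its differential is a unit.  The entry of the differential at
  (e_{U - {u}}, e_U) is \<plusminus> m_U / m_{U - {u}}, a monomial, which is a unit iff it equals 1,
  i.e. iff m_U = m_{U - {u}}.\<close>
definition lyubeznik_minimal :: "mono set \<Rightarrow> (mono \<times> mono) set \<Rightarrow> bool" where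
  "lyubeznik_minimal G R \<longleftrightarrow>
     (\<forall>U. lyub_adm G R U \<longrightarrow>
        (\<forall>u \<in> U. lyub_adm G R (U - {u}) \<longrightarrow> mlcm U \<noteq> mlcm (U - {u})))"

end

theory Submission
  imports Defs
begin

text \<open>
  The generators of \<open>U\<close> other
  than \<open>xy\<close> cannot involve both \<open>x\<close> and \<open>y\<close>: otherwise the smaller \<open>m\<close> of two of them, one
  through \<open>x\<close> and one through \<open>y\<close>, is not the largest element of \<open>U\<close>, satisfies \<open>xy < m\<close>, and
  \<open>xy\<close> divides the lcm of the elements \<open>\<ge> m\<close>.  Hence every element of \<open>U\<close> has a private
  variable, dividing it but no other element of \<open>U\<close>: for \<open>xy\<close> whichever of \<open>x\<close>, \<open>y\<close> the others
  avoid, and for an edge \<open>{x, r}\<close> (or \<open>{y, r}\<close>) its outer vertex \<open>r\<close>, since a second edge through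
  \<open>r\<close> would be \<open>{y, r}\<close> (or \<open>{x, r}\<close>) and bring both \<open>x\<close> and \<open>y\<close> into \<open>U\<close>.  Dropping an element
  drops its private variable from the lcm, so no entry of the differential is a unit.
\<close>

lemma mlcm_eq_0_iff:
  assumes "finite S"
  shows "mlcm S v = 0 \<longleftrightarrow> (\<forall>w\<in>S. w v = 0)"
proof -
  have "mlcm S v = 0 \<longleftrightarrow> mlcm S v \<le> 0" by simp
  also have "\<dots> \<longleftrightarrow> (\<forall>w\<in>S. w v \<le> 0)"
    unfolding mlcm_def using assms by (subst Max_le_iff) auto
  finally show ?thesis by simp
qed

lemma mlcm_Diff_singleton_neq:
  assumes "finite U" "u \<in> U" "u v \<noteq> 0" "\<forall>w\<in>U - {u}. w v = 0"
  shows "mlcm U \<noteq> mlcm (U - {u})"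
proof -
  have "mlcm U v \<noteq> 0"
    using assms by (auto simp: mlcm_eq_0_iff)
  moreover have "mlcm (U - {u}) v = 0"
    using assms by (simp add: mlcm_eq_0_iff)
  ultimately show ?thesis by metis
qed

lemma edge_mono_apply: "edge_mono e v = (if v \<in> e then 1 else 0)"
  by (simp add: edge_mono_def)

lemma mdvd_edge_mono_iff: "mdvd (edge_mono e) m \<longleftrightarrow> (\<forall>v\<in>e. m v \<noteq> 0)"
  by (auto simp: mdvd_def edge_mono_def)

lemma edge_mono_mdvd_iff: "mdvd (edge_mono e) (edge_mono f) \<longleftrightarrow> e \<subseteq> f"
  unfolding mdvd_edge_mono_iff by (auto simp: edge_mono_def)

lemma min_gens_edge_mono:
  assumes "\<And>e. e \<in> E \<Longrightarrow> card e = 2"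
  shows "min_gens (edge_mono ` E) = edge_mono ` E"
proof -
  have "e = f" if "e \<in> E" "f \<in> E" "e \<subseteq> f" for e f
    using that assms card_subset_eq[of f e] card.infinite[of f] by fastforce
  then show ?thesis
    unfolding min_gens_def by (auto simp: edge_mono_mdvd_iff) metis
qed

text \<open>Up to isolated vertices and renaming, these are exactly the graphs \<open>L(a, b, c)\<close>.\<close>

locale L_shaped_graph =
  fixes E :: "vtx set set" and x y :: vtx
  assumes finite_edges: "finite E"
    and xy_edge: "{x, y} \<in> E"
    and x_neq_y: "x \<noteq> y"
    and other_edges: "\<And>e. e \<in> E \<Longrightarrow> e \<noteq> {x, y} \<Longrightarrow>
      \<exists>r. r \<notin> {x, y} \<and> (e = {x, r} \<or> e = {y, r})"
begin

abbreviation xy_mono :: mono where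
  "xy_mono \<equiv> edge_mono {x, y}"

lemma min_gens_edges: "min_gens (edge_mono ` E) = edge_mono ` E"
proof (rule min_gens_edge_mono)
  fix e assume "e \<in> E"
  then show "card e = 2"
    using x_neq_y other_edges[of e] by (cases "e = {x, y}") auto
qed

lemma generator_cases:
  assumes "w \<in> edge_mono ` E"
  obtains "w = xy_mono"
  | r where "r \<notin> {x, y}" "w = edge_mono {x, r} \<or> w = edge_mono {y, r}"
  using assms other_edges by blast

lemma generator_avoids_x_or_y:
  assumes "w \<in> edge_mono ` E" "w \<noteq> xy_mono"
  shows "w x = 0 \<or> w y = 0"
  using assms x_neq_y by (cases rule: generator_cases) (auto simp: edge_mono_def)

lemma generator_through_outer_vertex:
  assumes "w \<in> edge_mono ` E" "r \<notin> {x, y}" "w r \<noteq> 0"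
  shows "w = edge_mono {x, r} \<or> w = edge_mono {y, r}"
  using assms by (cases rule: generator_cases) (auto simp: edge_mono_def split: if_splits)

lemma lyub_adm_avoids_x_or_y:
  assumes order: "strict_linear_order_on (edge_mono ` E) R"
    and least: "\<forall>u\<in>edge_mono ` E. u \<noteq> xy_mono \<longrightarrow> (xy_mono, u) \<in> R"
    and adm: "lyub_adm (edge_mono ` E) R U"
  shows "(\<forall>w\<in>U - {xy_mono}. w x = 0) \<or> (\<forall>w\<in>U - {xy_mono}. w y = 0)"
proof (rule ccontr)
  assume "\<not> ?thesis"
  then obtain w1 w2 where w1: "w1 \<in> U" "w1 \<noteq> xy_mono" "w1 x \<noteq> 0"
    and w2: "w2 \<in> U" "w2 \<noteq> xy_mono" "w2 y \<noteq> 0"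
    by auto
  have U_gens: "U \<subseteq> edge_mono ` E"
    using adm by (simp add: lyub_adm_def)
  then have "finite U"
    using finite_edges by (simp add: finite_subset)
  have gens: "w1 \<in> edge_mono ` E" "w2 \<in> edge_mono ` E"
    using w1 w2 U_gens by auto
  then have "w1 \<noteq> w2"
    using generator_avoids_x_or_y[of w1] w1 w2 by auto
  moreover have "total_on (edge_mono ` E) R"
    using order by (simp add: strict_linear_order_on_def)
  ultimately have "(w1, w2) \<in> R \<or> (w2, w1) \<in> R"
    using gens unfolding total_on_def by blast
  then obtain m m' where mm': "{m, m'} = {w1, w2}" "(m, m') \<in> R"
    by blast
  then have m: "m \<in> U" "m \<noteq> xy_mono" and "m' \<in> U"
    using w1 w2 by (auto simp: doubleton_eq_iff)
  define S where "S = {w \<in> U. w = m \<or> (m, w) \<in> R}"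
  have "(xy_mono, m) \<in> R"
    using least m U_gens by blast
  then have "\<not> mdvd xy_mono (mlcm S)"
    using adm m \<open>m' \<in> U\<close> mm'(2) xy_edge unfolding lyub_adm_def S_def by blast
  moreover have "finite S"
    using \<open>finite U\<close> unfolding S_def by simp
  moreover have "w1 \<in> S" "w2 \<in> S"
    using mm' w1 w2 unfolding S_def by (auto simp: doubleton_eq_iff)
  ultimately show False
    using w1 w2 by (auto simp: mdvd_edge_mono_iff mlcm_eq_0_iff)
qed

lemma generator_private_vertex:
  assumes U_gens: "U \<subseteq> edge_mono ` E" and "u \<in> U"
    and avoids: "(\<forall>w\<in>U - {xy_mono}. w x = 0) \<or> (\<forall>w\<in>U - {xy_mono}. w y = 0)"
  shows "\<exists>v. u v \<noteq> 0 \<and> (\<forall>w\<in>U - {u}. w v = 0)"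
proof -
  have "u \<in> edge_mono ` E"
    using U_gens \<open>u \<in> U\<close> by blast
  then show ?thesis
  proof (cases rule: generator_cases)
    case 1
    from avoids show ?thesis
    proof
      assume "\<forall>w\<in>U - {xy_mono}. w x = 0"
      then show ?thesis
        using 1 by (intro exI[of _ x]) (simp add: edge_mono_apply)
    next
      assume "\<forall>w\<in>U - {xy_mono}. w y = 0"
      then show ?thesis
        using 1 by (intro exI[of _ y]) (simp add: edge_mono_apply)
    qed
  next
    case (2 r)
    have "u r \<noteq> 0" "xy_mono r = 0"
      using 2 by (auto simp: edge_mono_apply)
    have "w r = 0" if w: "w \<in> U - {u}" for w
    proof (rule ccontr)
      assume "w r \<noteq> 0"
      moreover have "w \<in> edge_mono ` E"
        using w U_gens by blast
      ultimately have "w = edge_mono {x, r} \<or> w = edge_mono {y, r}"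
        using generator_through_outer_vertex 2(1) by blast
      with 2(2) w have "u = edge_mono {x, r} \<and> w = edge_mono {y, r} \<or>
          u = edge_mono {y, r} \<and> w = edge_mono {x, r}"
        by blast
      then have "u x \<noteq> 0 \<and> w y \<noteq> 0 \<or> u y \<noteq> 0 \<and> w x \<noteq> 0"
        by (auto simp: edge_mono_apply)
      moreover have "u \<in> U - {xy_mono}" "w \<in> U - {xy_mono}"
        using \<open>u r \<noteq> 0\<close> \<open>w r \<noteq> 0\<close> \<open>xy_mono r = 0\<close> w \<open>u \<in> U\<close> by blast+
      ultimately show False
        using avoids by metis
    qed
    with \<open>u r \<noteq> 0\<close> show ?thesis by blast
  qed
qed

lemma lyubeznik_minimal_if_xy_least:
  assumes order: "strict_linear_order_on (edge_mono ` E) R"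
    and least: "\<forall>u\<in>edge_mono ` E. u \<noteq> xy_mono \<longrightarrow> (xy_mono, u) \<in> R"
  shows "lyubeznik_minimal (edge_mono ` E) R"
  unfolding lyubeznik_minimal_def
proof (intro allI impI ballI)
  fix U u
  assume adm: "lyub_adm (edge_mono ` E) R U" and "u \<in> U"
  have U_gens: "U \<subseteq> edge_mono ` E"
    using adm by (simp add: lyub_adm_def)
  then have "finite U"
    using finite_edges by (simp add: finite_subset)
  obtain v where "u v \<noteq> 0" "\<forall>w\<in>U - {u}. w v = 0"
    using generator_private_vertex[OF U_gens \<open>u \<in> U\<close> lyub_adm_avoids_x_or_y[OF order least adm]]
    by blast
  with \<open>finite U\<close> \<open>u \<in> U\<close> show "mlcm U \<noteq> mlcm (U - {u})"
    by (rule mlcm_Diff_singleton_neq)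
qed

end

lemma L_shaped_graph_Ledges: "L_shaped_graph (Ledges a b c) VX VY"
proof
  fix e assume "e \<in> Ledges a b c" "e \<noteq> {VX, VY}"
  then show "\<exists>r. r \<notin> {VX, VY} \<and> (e = {VX, r} \<or> e = {VY, r})"
    unfolding Ledges_def by (elim UnE imageE) auto
qed (simp_all add: Ledges_def)

lemma GL_eq: "GL a b c = edge_mono ` Ledges a b c"
  unfolding GL_def using L_shaped_graph.min_gens_edges[OF L_shaped_graph_Ledges] .

theorem mainTheorem2:
  fixes a b c :: nat and R :: "(mono \<times> mono) set"
  assumes "strict_linear_order_on (GL a b c) R"
    and "R \<subseteq> GL a b c \<times> GL a b c"
    and "\<forall>u \<in> GL a b c. u \<noteq> edge_mono {VX, VY} \<longrightarrow> (edge_mono {VX, VY}, u) \<in> R"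
  shows "lyubeznik_minimal (GL a b c) R"
  using L_shaped_graph.lyubeznik_minimal_if_xy_least[OF L_shaped_graph_Ledges] assms(1,3)
  unfolding GL_eq by blast

end
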